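(* Let $P(t)=\sum_{n\ge0}p_nt^n$, where $p_n$ is the number of permutations of length $n$ sortable by two stacks in parallel, and let $t_c$ be the radius of convergence of $P$. Then for every $t\in[0,t_c)$, \[\sqrt{2P(t)}\ \ge\ 1+\sqrt{2tP(t)},\] and the inequality also holds at $t=t_c$, where $P(t_c)=\lim_{t\to t_c^-}P(t)$.
   Context: A permutation $\sigma$ of $\{1,\dots,n\}$ is \emph{sortable by two stacks in parallel} if, starting with the sequence $\sigma(1)\sigma(2)\cdots\sigma(n)$ as input and two initially empty stacks, one can repeatedly either move the next input element onto the top of either stack, or move the top element of either stack to the output, so that at the end the output is $1,2,\dots,n$ in that order. A permutation is \emph{sortable by a deque} if the same holds with the two stacks replaced by a single double-ended queue (elements may be inserted and removed at either end). Let $D(t)=\sum_{n\ge0}d_nt^n$, $d_n$ the number of deque-sortable permutations of length $n$. It is known (and may be assumed) that, writing $P=P(t)$, \[2D(t)=2+t+2Pt-2Pt^2-t\sqrt{1-4P+4P^2-8P^2t+4P^2t^2-4Pt}\] as formal power series, and that $P$ and $D$ have the same radius of convergence $t_c$ (equal exponential growth rates of $p_n$ and $d_n$), with $t_c<1$. *)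

theory Defs
  imports "HOL-Analysis.Analysis" "HOL-Computational_Algebra.Formal_Power_Series"
begin

definition is_perm :: "nat \<Rightarrow> nat list \<Rightarrow> bool" where
  "is_perm n xs \<longleftrightarrow> distinct xs \<and> set xs = {1..n}"

inductive pstep :: "nat list \<times> nat list \<times> nat list \<times> nat list \<Rightarrow>
                    nat list \<times> nat list \<times> nat list \<times> nat list \<Rightarrow> bool" where
  push1: "pstep (x # inp, s1, s2, out) (inp, x # s1, s2, out)"
| push2: "pstep (x # inp, s1, s2, out) (inp, s1, x # s2, out)"
| pop1:  "pstep (inp, x # s1, s2, out) (inp, s1, s2, out @ [x])"
| pop2:  "pstep (inp, s1, x # s2, out) (inp, s1, s2, out @ [x])"

definition par_stack_sortable :: "nat list \<Rightarrow> bool" where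
  "par_stack_sortable \<sigma> \<longleftrightarrow>
     pstep\<^sup>*\<^sup>* (\<sigma>, [], [], []) ([], [], [], [1..<length \<sigma> + 1])"

inductive dstep :: "nat list \<times> nat list \<times> nat list \<Rightarrow>
                    nat list \<times> nat list \<times> nat list \<Rightarrow> bool" where
  push_front: "dstep (x # inp, q, out) (inp, x # q, out)"
| push_back:  "dstep (x # inp, q, out) (inp, q @ [x], out)"
| pop_front:  "dstep (inp, x # q, out) (inp, q, out @ [x])"
| pop_back:   "dstep (inp, q @ [x], out) (inp, q, out @ [x])"

definition deque_sortable :: "nat list \<Rightarrow> bool" where
  "deque_sortable \<sigma> \<longleftrightarrow>
     dstep\<^sup>*\<^sup>* (\<sigma>, [], []) ([], [], [1..<length \<sigma> + 1])"

definition p_count :: "nat \<Rightarrow> nat" where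
  "p_count n = card {\<sigma>. is_perm n \<sigma> \<and> par_stack_sortable \<sigma>}"

definition d_count :: "nat \<Rightarrow> nat" where
  "d_count n = card {\<sigma>. is_perm n \<sigma> \<and> deque_sortable \<sigma>}"

definition Pfps :: "real fps" where "Pfps = Abs_fps (\<lambda>n. real (p_count n))"
definition Dfps :: "real fps" where "Dfps = Abs_fps (\<lambda>n. real (d_count n))"

definition Pval :: "real \<Rightarrow> real" where
  "Pval t = (\<Sum>n. real (p_count n) * t ^ n)"

end

theory Submission
  imports Defs
begin

text \<open>A sorting of a permutation by two parallel stacks is recorded by the word of its
  \<open>2n\<close> moves, and replaying a word backwards from the sorted output recovers the permutation;
  hence \<open>p\<^sub>n \<le> 16\<^sup>n\<close> and \<open>t\<^sub>c > 0\<close>. Using the two stacks as the two ends of a deque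
  shows \<open>p\<^sub>n \<le> d\<^sub>n\<close>.

  For \<open>0 \<le> t < t\<^sub>c\<close> the functional equation evaluates to real identities. With
  \<open>a = \<surd>(2P)\<close> and \<open>b = \<surd>(2tP)\<close> the radicand factors as \<open>((a + b)\<^sup>2 - 1)((a - b)\<^sup>2 - 1)\<close>;
  it is a square and the first factor is positive since \<open>P \<ge> 1\<close>, so \<open>a - b \<ge> 1\<close>.
  The same identities together with \<open>P \<le> D\<close> bound \<open>P\<close> by 3, so the increasing
  function \<open>P\<close> has a finite limit at \<open>t\<^sub>c\<close>, and the inequality passes to it.\<close>

type_synonym pconfig = "nat list \<times> nat list \<times> nat list \<times> nat list"

inductive pstep_labelled :: "nat \<Rightarrow> pconfig \<Rightarrow> pconfig \<Rightarrow> bool" where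
  "pstep_labelled 0 (x # inp, s1, s2, out) (inp, x # s1, s2, out)"
| "pstep_labelled 1 (x # inp, s1, s2, out) (inp, s1, x # s2, out)"
| "pstep_labelled 2 (inp, x # s1, s2, out) (inp, s1, s2, out @ [x])"
| "pstep_labelled 3 (inp, s1, x # s2, out) (inp, s1, s2, out @ [x])"

inductive pstep_word :: "nat list \<Rightarrow> pconfig \<Rightarrow> pconfig \<Rightarrow> bool" where
  Nil: "pstep_word [] c c"
| Cons: "pstep_labelled k c c' \<Longrightarrow> pstep_word ks c' c'' \<Longrightarrow> pstep_word (k # ks) c c''"

lemma pstep_imp_labelled: "pstep c c' \<Longrightarrow> \<exists>k. pstep_labelled k c c'"
  by (induction rule: pstep.induct) (auto intro: pstep_labelled.intros)

lemma rtranclp_pstep_imp_word: "pstep\<^sup>*\<^sup>* c c' \<Longrightarrow> \<exists>ks. pstep_word ks c c'"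
proof (induction rule: converse_rtranclp_induct)
  case base
  show ?case by (blast intro: pstep_word.Nil)
next
  case (step c c1)
  then show ?case by (metis pstep_imp_labelled pstep_word.Cons)
qed

lemma pstep_word_labels_less_4: "pstep_word ks c c' \<Longrightarrow> set ks \<subseteq> {0..<4}"
  by (induction rule: pstep_word.induct) (auto elim: pstep_labelled.cases)

fun pending_moves :: "pconfig \<Rightarrow> nat" where
  "pending_moves (inp, s1, s2, out) = 2 * length inp + length s1 + length s2"

lemma pstep_labelled_pending_moves: "pstep_labelled k c c' \<Longrightarrow> pending_moves c = Suc (pending_moves c')"
  by (induction rule: pstep_labelled.induct) auto

lemma pstep_word_pending_moves: "pstep_word ks c c' \<Longrightarrow> pending_moves c = length ks + pending_moves c'"
  by (induction rule: pstep_word.induct) (auto dest: pstep_labelled_pending_moves)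

lemma pstep_labelled_backward_unique:
  "pstep_labelled k c1 c' \<Longrightarrow> pstep_labelled k c2 c' \<Longrightarrow> c1 = c2"
  by (erule pstep_labelled.cases; erule pstep_labelled.cases; simp)

lemma pstep_word_backward_unique:
  "pstep_word ks c1 c' \<Longrightarrow> pstep_word ks c2 c' \<Longrightarrow> c1 = c2"
proof (induction arbitrary: c2 rule: pstep_word.induct)
  case Nil
  then show ?case by (cases rule: pstep_word.cases) auto
next
  case (Cons k c c1 ks c'')
  from \<open>pstep_word (k # ks) c2 c''\<close> obtain d where "pstep_labelled k c2 d" "pstep_word ks d c''"
    by (cases rule: pstep_word.cases) auto
  with Cons show ?case
    using pstep_labelled_backward_unique by metis
qed

lemma is_perm_length: "is_perm n \<sigma> \<Longrightarrow> length \<sigma> = n"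
  unfolding is_perm_def using distinct_card by fastforce

lemma p_count_le_16_power: "p_count n \<le> 16 ^ n"
proof -
  let ?final = "([], [], [], [1..<n + 1])"
  let ?A = "{\<sigma>. is_perm n \<sigma> \<and> par_stack_sortable \<sigma>}"
  let ?W = "{ks. set ks \<subseteq> {0..<4::nat} \<and> length ks = 2 * n}"
  have "\<exists>ks. pstep_word ks (\<sigma>, [], [], []) ?final" if "\<sigma> \<in> ?A" for \<sigma>
    using that rtranclp_pstep_imp_word[of "(\<sigma>, [], [], [])"] is_perm_length[of n \<sigma>]
    unfolding par_stack_sortable_def by auto
  then obtain word where word: "\<And>\<sigma>. \<sigma> \<in> ?A \<Longrightarrow> pstep_word (word \<sigma>) (\<sigma>, [], [], []) ?final"
    by (metis (no_types, lifting))
  have "inj_on word ?A"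
  proof (rule inj_onI)
    fix \<sigma>1 \<sigma>2 assume \<sigma>: "\<sigma>1 \<in> ?A" "\<sigma>2 \<in> ?A" and same_word: "word \<sigma>1 = word \<sigma>2"
    have "pstep_word (word \<sigma>1) (\<sigma>2, [], [], []) ?final"
      using word[OF \<sigma>(2)] same_word by simp
    with word[OF \<sigma>(1)] show "\<sigma>1 = \<sigma>2"
      using pstep_word_backward_unique by blast
  qed
  moreover have "word \<sigma> \<in> ?W" if "\<sigma> \<in> ?A" for \<sigma>
    using pstep_word_labels_less_4[OF word[OF that]] pstep_word_pending_moves[OF word[OF that]]
      is_perm_length[of n \<sigma>] that by simp
  then have "word ` ?A \<subseteq> ?W"
    by blast
  moreover have "finite ?W"
    by (rule finite_lists_length_eq) simp
  ultimately have "card ?A \<le> card ?W"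
    by (rule card_inj_on_le)
  also have "card ?W = 16 ^ n"
    by (simp add: card_lists_length_eq power_mult)
  finally show ?thesis
    unfolding p_count_def .
qed

fun pconfig_to_deque :: "pconfig \<Rightarrow> nat list \<times> nat list \<times> nat list" where
  "pconfig_to_deque (inp, s1, s2, out) = (inp, s1 @ rev s2, out)"

lemma pstep_imp_dstep: "pstep c c' \<Longrightarrow> dstep (pconfig_to_deque c) (pconfig_to_deque c')"
proof (induction rule: pstep.induct)
  case (push2 x inp s1 s2 out)
  then show ?case using dstep.push_back[of x inp "s1 @ rev s2" out] by simp
next
  case (pop2 inp s1 x s2 out)
  then show ?case using dstep.pop_back[of inp "s1 @ rev s2" x out] by simp
qed (auto intro: dstep.intros)

lemma rtranclp_pstep_imp_dstep:
  "pstep\<^sup>*\<^sup>* c c' \<Longrightarrow> dstep\<^sup>*\<^sup>* (pconfig_to_deque c) (pconfig_to_deque c')"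
  by (induction rule: rtranclp_induct) (auto intro: rtranclp.rtrancl_into_rtrancl pstep_imp_dstep)

lemma par_stack_sortable_imp_deque_sortable: "par_stack_sortable \<sigma> \<Longrightarrow> deque_sortable \<sigma>"
  unfolding par_stack_sortable_def deque_sortable_def
  using rtranclp_pstep_imp_dstep by fastforce

lemma finite_is_perm: "finite {\<sigma>. is_perm n \<sigma>}"
proof (rule finite_subset)
  show "{\<sigma>. is_perm n \<sigma>} \<subseteq> {xs. set xs \<subseteq> {1..n} \<and> length xs = n}"
    by (auto simp: is_perm_def distinct_card[symmetric])
qed (rule finite_lists_length_eq, simp)

lemma p_count_le_d_count: "p_count n \<le> d_count n"
  unfolding p_count_def d_count_def
  by (rule card_mono) (auto intro: finite_subset[OF _ finite_is_perm] par_stack_sortable_imp_deque_sortable)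

lemma p_count_0: "p_count 0 = 1"
proof -
  have "{\<sigma>. is_perm 0 \<sigma> \<and> par_stack_sortable \<sigma>} = {[]}"
    by (auto simp: is_perm_def par_stack_sortable_def)
  then show ?thesis
    unfolding p_count_def by simp
qed

definition radicand :: "real \<Rightarrow> real \<Rightarrow> real" where
  "radicand P t = 1 - 4*P + 4*P^2 - 8*P^2*t + 4*P^2*t^2 - 4*P*t"

lemma radicand_factorization:
  assumes "0 \<le> P" "0 \<le> t"
  shows "radicand P t = ((sqrt (2*P) + sqrt (2*t*P))^2 - 1) * ((sqrt (2*P) - sqrt (2*t*P))^2 - 1)"
proof -
  have a: "sqrt (2*P)^2 = 2*P" and b: "sqrt (2*t*P)^2 = 2*t*P"
    using assms by simp_all
  have "((sqrt (2*P) + sqrt (2*t*P))^2 - 1) * ((sqrt (2*P) - sqrt (2*t*P))^2 - 1)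
      = (sqrt (2*P)^2 - sqrt (2*t*P)^2)^2 - 2 * sqrt (2*P)^2 - 2 * sqrt (2*t*P)^2 + 1"
    by (simp add: algebra_simps power2_eq_square)
  also have "\<dots> = radicand P t"
    unfolding a b radicand_def by (simp add: algebra_simps power2_eq_square)
  finally show ?thesis ..
qed

lemma sqrt_inequality_of_radicand_nonneg:
  assumes P: "1 \<le> P" and t: "0 \<le> t" "t \<le> 1" and radicand: "0 \<le> radicand P t"
  shows "1 + sqrt (2*t*P) \<le> sqrt (2*P)"
proof -
  define a b where "a = sqrt (2*P)" and "b = sqrt (2*t*P)"
  have "0 \<le> b" "b \<le> a"
    using P t by (auto simp: a_def b_def intro!: real_sqrt_le_mono mult_right_le_one_le)
  have "1 < (a + b)^2"
  proof -
    have "a^2 \<le> (a + b)^2"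
      using \<open>0 \<le> b\<close> \<open>b \<le> a\<close> by (intro power_mono) auto
    then show ?thesis
      using P by (simp add: a_def)
  qed
  moreover have "0 \<le> ((a + b)^2 - 1) * ((a - b)^2 - 1)"
    using radicand radicand_factorization[of P t] P t by (simp add: a_def b_def)
  ultimately have "1 \<le> (a - b)^2"
    by (simp add: zero_le_mult_iff)
  then have "1 \<le> a - b"
    using \<open>b \<le> a\<close> power2_le_imp_le[of 1 "a - b"] by simp
  then show ?thesis
    by (simp add: a_def b_def)
qed

lemma le_3_of_deque_relation:
  fixes P t s D :: real
  assumes P: "1 \<le> P" and t: "0 \<le> t" "t < 1"
    and s: "s^2 = radicand P t"
    and D: "2 * D = 2 + t + 2*P*t - 2*P*t^2 - t * s"
    and P_le_D: "P \<le> D"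
  shows "P \<le> 3"
proof -
  have "s^2 \<le> (2*P*(1 - t))^2"
  proof -
    have "(2*P*(1 - t))^2 = radicand P t + 4*P*(1 + t) - 1"
      by (simp add: radicand_def algebra_simps power2_eq_square)
    moreover have "1 \<le> 4*P*(1 + t)"
      using P t mult_mono[of 1 "4*P" 1 "1 + t"] by simp
    ultimately show ?thesis
      using s by linarith
  qed
  then have "- s \<le> 2*P*(1 - t)"
    using P t abs_le_square_iff[of s "2*P*(1 - t)"] by auto
  then have "- t * s \<le> 2*P*t - 2*P*t^2"
    using mult_left_mono[of "- s" "2*P*(1 - t)" t] t by (simp add: algebra_simps power2_eq_square)
  then have "P * (2 - 4*t + 4*t^2) \<le> 2 + t"
    using D P_le_D by (simp add: algebra_simps power2_eq_square)
  moreover have "P \<le> P * (2 - 4*t + 4*t^2)"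
    using P mult_left_mono[of 1 "2 - 4*t + 4*t^2" P] zero_le_power2[of "1 - 2*t"]
    by (simp add: algebra_simps power2_eq_square)
  ultimately show ?thesis
    using t by linarith
qed

lemma less_fps_conv_radius_add:
  "x < fps_conv_radius f \<Longrightarrow> x < fps_conv_radius g \<Longrightarrow> x < fps_conv_radius (f + g)"
  using fps_conv_radius_add[of f g] by (meson min_less_iff_conj order_less_le_trans)

lemma less_fps_conv_radius_diff:
  "x < fps_conv_radius f \<Longrightarrow> x < fps_conv_radius g \<Longrightarrow> x < fps_conv_radius (f - g)"
  using fps_conv_radius_diff[of f g] by (meson min_less_iff_conj order_less_le_trans)

lemma less_fps_conv_radius_mult:
  fixes f g :: "'a :: {banach, real_normed_div_algebra, comm_ring_1} fps"
  shows "x < fps_conv_radius f \<Longrightarrow> x < fps_conv_radius g \<Longrightarrow> x < fps_conv_radius (f * g)"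
  using fps_conv_radius_mult[of f g] by (meson min_less_iff_conj order_less_le_trans)

lemma less_fps_conv_radius_power:
  fixes f :: "'a :: {banach, real_normed_div_algebra, comm_ring_1} fps"
  shows "x < fps_conv_radius f \<Longrightarrow> x < fps_conv_radius (f ^ n)"
  using fps_conv_radius_power[of f n] by (meson order_less_le_trans)

lemmas less_fps_conv_radius_intros =
  less_fps_conv_radius_add less_fps_conv_radius_diff less_fps_conv_radius_mult less_fps_conv_radius_power

lemmas eval_fps_arith = eval_fps_add eval_fps_diff eval_fps_mult eval_fps_power

lemma conv_radius_p_count_pos: "0 < conv_radius (\<lambda>n. real (p_count n))"
proof -
  have "summable (\<lambda>n. real (p_count n) * (1/32)^n)"
  proof (rule summable_comparison_test')
    show "summable (\<lambda>n. (1/2::real)^n)"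
      by simp
    fix n :: nat
    have "real (p_count n) * (1/32)^n \<le> 16^n * (1/32)^n"
      using p_count_le_16_power[of n] by (intro mult_right_mono) (simp_all flip: of_nat_le_iff)
    also have "\<dots> = (1/2)^n"
      by (simp flip: power_mult_distrib)
    finally show "norm (real (p_count n) * (1/32)^n) \<le> (1/2)^n"
      by simp
  qed
  then have "ereal (1/32) \<le> conv_radius (\<lambda>n. real (p_count n))"
    using conv_radius_geI[of "\<lambda>n. real (p_count n)" "1/32"] by simp
  then show ?thesis
    by (rule order.strict_trans2[rotated]) simp
qed

lemma eval_Pfps: "eval_fps Pfps t = Pval t"
  by (simp add: eval_fps_def Pval_def Pfps_def)

lemma Pval_mono:
  assumes "0 \<le> x" "x \<le> y" "ereal y < conv_radius (\<lambda>n. real (p_count n))"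
  shows "Pval x \<le> Pval y"
proof -
  have "ereal x < conv_radius (\<lambda>n. real (p_count n))"
    using assms by (meson ereal_less_eq(3) order_le_less_trans)
  then show ?thesis
    unfolding Pval_def using assms
    by (intro suminf_le summable_in_conv_radius) (auto intro!: mult_left_mono power_mono)
qed

lemma Pval_ge_1:
  assumes "0 \<le> t" "ereal t < conv_radius (\<lambda>n. real (p_count n))"
  shows "1 \<le> Pval t"
proof -
  have "(\<Sum>n\<in>{0}. real (p_count n) * t ^ n) \<le> Pval t"
    unfolding Pval_def using assms by (intro sum_le_suminf summable_in_conv_radius) auto
  then show ?thesis
    by (simp add: p_count_0)
qed

lemma Pval_le_eval_Dfps:
  assumes "0 \<le> t" "ereal t < conv_radius (\<lambda>n. real (p_count n))"
    and "conv_radius (\<lambda>n. real (d_count n)) = conv_radius (\<lambda>n. real (p_count n))"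
  shows "Pval t \<le> eval_fps Dfps t"
  unfolding Pval_def eval_fps_def Dfps_def fps_nth_Abs_fps using assms
  by (intro suminf_le summable_in_conv_radius mult_right_mono) (simp_all add: p_count_le_d_count)

lemma mono_on_bounded_tendsto_at_left:
  fixes f :: "real \<Rightarrow> real"
  assumes "a < b" and mono: "mono_on {a..<b} f" and bound: "\<And>x. x \<in> {a..<b} \<Longrightarrow> f x \<le> B"
  shows "(f \<longlongrightarrow> (SUP x\<in>{a..<b}. f x)) (at_left b)"
proof -
  have bdd: "bdd_above (f ` {a..<b})"
    using bound by (intro bdd_aboveI2)
  show ?thesis
  proof (rule order_tendstoI)
    fix y assume "y < (SUP x\<in>{a..<b}. f x)"
    then obtain x where x: "x \<in> {a..<b}" "y < f x"
      using \<open>a < b\<close> bdd by (auto simp: less_cSUP_iff)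
    have "eventually (\<lambda>z. z \<in> {x<..<b}) (at_left b)"
      using x by (intro eventually_at_left_real) auto
    then show "eventually (\<lambda>z. y < f z) (at_left b)"
    proof (rule eventually_mono)
      fix z assume "z \<in> {x<..<b}"
      then have "f x \<le> f z"
        using x by (intro mono_onD[OF mono]) auto
      with x show "y < f z"
        by linarith
    qed
  next
    fix y assume y: "(SUP x\<in>{a..<b}. f x) < y"
    have "eventually (\<lambda>z. z \<in> {a<..<b}) (at_left b)"
      using \<open>a < b\<close> by (intro eventually_at_left_real) auto
    then show "eventually (\<lambda>z. f z < y) (at_left b)"
    proof (rule eventually_mono)
      fix z assume "z \<in> {a<..<b}"
      then have "f z \<le> (SUP x\<in>{a..<b}. f x)"
        using bdd by (intro cSUP_upper) auto
      with y show "f z < y"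
        by linarith
    qed
  qed
qed

locale deque_functional_equation =
  fixes tc :: real and S :: "real fps"
  assumes radius: "ereal tc = conv_radius (\<lambda>n. real (p_count n))"
    and same_radius: "conv_radius (\<lambda>n. real (d_count n)) = conv_radius (\<lambda>n. real (p_count n))"
    and S_square: "S ^ 2 = 1 - 4 * Pfps + 4 * Pfps ^ 2 - 8 * Pfps ^ 2 * fps_X
                + 4 * Pfps ^ 2 * fps_X ^ 2 - 4 * Pfps * fps_X"
    and D_equation: "2 * Dfps = 2 + fps_X + 2 * Pfps * fps_X - 2 * Pfps * fps_X ^ 2 - fps_X * S"
    and tc_less_1: "tc < 1"
begin

lemma tc_pos: "0 < tc"
  using conv_radius_p_count_pos by (simp flip: radius)

lemma Pval_ge_1_below_tc: "0 \<le> t \<Longrightarrow> t < tc \<Longrightarrow> 1 \<le> Pval t"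
  using Pval_ge_1 by (simp flip: radius)

lemma eval_relations:
  assumes t: "0 \<le> t" "t < tc"
  shows "(eval_fps S t)^2 = radicand (Pval t) t"
    and "2 * eval_fps Dfps t = 2 + t + 2 * Pval t * t - 2 * Pval t * t^2 - t * eval_fps S t"
proof -
  have P: "ereal (norm t) < fps_conv_radius Pfps"
    using radius t by (simp add: fps_conv_radius_def Pfps_def flip: radius)
  have D: "ereal (norm t) < fps_conv_radius Dfps"
    using radius t by (simp add: fps_conv_radius_def Dfps_def same_radius flip: radius)
  \<comment> \<open>The radius of \<open>S\<close> is not given; it is inherited from \<open>P\<close> and \<open>D\<close> through the relation for \<open>2D\<close>.\<close>
  have "S * fps_X = 2 + fps_X + 2 * Pfps * fps_X - 2 * Pfps * fps_X ^ 2 - 2 * Dfps"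
    using D_equation by (simp add: algebra_simps)
  then have "ereal (norm t) < fps_conv_radius (S * fps_X)"
    using P D by (simp add: less_fps_conv_radius_intros)
  then have S: "ereal (norm t) < fps_conv_radius S"
    by (metis fps_conv_radius_shift fps_shift_times_fps_X')
  have "(eval_fps S t)^2 = eval_fps (S ^ 2) t"
    using S by (simp add: eval_fps_power)
  also have "\<dots> = radicand (Pval t) t"
    unfolding S_square using P by (simp add: eval_fps_arith less_fps_conv_radius_intros eval_Pfps radicand_def)
  finally show "(eval_fps S t)^2 = radicand (Pval t) t" .
  have "2 * eval_fps Dfps t = eval_fps (2 * Dfps) t"
    using D by (simp add: eval_fps_mult)
  also have "\<dots> = 2 + t + 2 * Pval t * t - 2 * Pval t * t^2 - t * eval_fps S t"
    unfolding D_equation using P S by (simp add: eval_fps_arith less_fps_conv_radius_intros eval_Pfps)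
  finally show "2 * eval_fps Dfps t = 2 + t + 2 * Pval t * t - 2 * Pval t * t^2 - t * eval_fps S t" .
qed

lemma sqrt_inequality_below_tc:
  assumes t: "0 \<le> t" "t < tc"
  shows "1 + sqrt (2 * t * Pval t) \<le> sqrt (2 * Pval t)"
proof (rule sqrt_inequality_of_radicand_nonneg[OF Pval_ge_1_below_tc[OF t] t(1)])
  show "t \<le> 1"
    using t tc_less_1 by simp
  show "0 \<le> radicand (Pval t) t"
    by (simp flip: eval_relations(1)[OF t])
qed

lemma Pval_le_3:
  assumes t: "0 \<le> t" "t < tc"
  shows "Pval t \<le> 3"
proof (rule le_3_of_deque_relation[OF Pval_ge_1_below_tc[OF t] t(1) _ eval_relations[OF t]])
  show "t < 1"
    using t tc_less_1 by simp
  show "Pval t \<le> eval_fps Dfps t"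
    using Pval_le_eval_Dfps[OF t(1) _ same_radius] t(2) by (simp flip: radius)
qed

lemma Pval_tendsto_at_left_tc: "(Pval \<longlongrightarrow> (SUP t\<in>{0..<tc}. Pval t)) (at_left tc)"
proof (rule mono_on_bounded_tendsto_at_left[OF tc_pos])
  show "mono_on {0..<tc} Pval"
    by (intro mono_onI Pval_mono) (auto simp flip: radius)
qed (auto intro: Pval_le_3)

lemma sqrt_inequality_at_tc:
  defines "L \<equiv> SUP t\<in>{0..<tc}. Pval t"
  shows "1 + sqrt (2 * tc * L) \<le> sqrt (2 * L)"
proof -
  have "((\<lambda>t. sqrt (2 * Pval t) - sqrt (2 * t * Pval t)) \<longlongrightarrow> sqrt (2 * L) - sqrt (2 * tc * L))
      (at_left tc)"
    unfolding L_def by (intro tendsto_intros Pval_tendsto_at_left_tc tendsto_ident_at)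
  moreover have "eventually (\<lambda>t. 1 \<le> sqrt (2 * Pval t) - sqrt (2 * t * Pval t)) (at_left tc)"
    using eventually_at_left_real[OF tc_pos]
  proof (rule eventually_mono)
    fix t :: real assume "t \<in> {0<..<tc}"
    then have "1 + sqrt (2 * t * Pval t) \<le> sqrt (2 * Pval t)"
      by (intro sqrt_inequality_below_tc) auto
    then show "1 \<le> sqrt (2 * Pval t) - sqrt (2 * t * Pval t)"
      by linarith
  qed
  ultimately have "1 \<le> sqrt (2 * L) - sqrt (2 * tc * L)"
    by (intro tendsto_lowerbound) auto
  then show ?thesis
    by linarith
qed

end

theorem theorem3p1:
  fixes tc :: real
  assumes tc_def: "ereal tc = conv_radius (\<lambda>n. real (p_count n))"
    and known_D: "\<exists>S :: real fps. fps_nth S 0 = 1 \<and>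
        S ^ 2 = 1 - 4 * Pfps + 4 * Pfps ^ 2 - 8 * Pfps ^ 2 * fps_X
                + 4 * Pfps ^ 2 * fps_X ^ 2 - 4 * Pfps * fps_X \<and>
        2 * Dfps = 2 + fps_X + 2 * Pfps * fps_X - 2 * Pfps * fps_X ^ 2 - fps_X * S"
    and same_radius: "conv_radius (\<lambda>n. real (d_count n)) = conv_radius (\<lambda>n. real (p_count n))"
    and tc_lt_1: "tc < 1"
  shows "(\<forall>t. 0 \<le> t \<and> t < tc \<longrightarrow> sqrt (2 * Pval t) \<ge> 1 + sqrt (2 * t * Pval t))
       \<and> (\<exists>L. (Pval \<longlongrightarrow> L) (at_left tc) \<and> sqrt (2 * L) \<ge> 1 + sqrt (2 * tc * L))"
proof -
  obtain S where "deque_functional_equation tc S"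
    using known_D tc_def same_radius tc_lt_1 by (auto intro: deque_functional_equation.intro)
  then interpret deque_functional_equation tc S .
  show ?thesis
    using sqrt_inequality_below_tc Pval_tendsto_at_left_tc sqrt_inequality_at_tc by blast
qed

end
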